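(* Suppose Assumptions 1, 2 and 4 hold, and let $\mathcal{B}=\mathcal{B}_\beta\times\mathcal{B}_\gamma\subseteq\Theta$ with $\mathcal{B}_\beta\subset\mathbb{R}^k$ and $\mathcal{B}_\gamma\subset\Theta_\gamma$ compact. Then for every $\theta\in\mathcal{B}$ the matrix $$\Psi(\theta)=E\begin{pmatrix}\frac{XX'}{s(X'\gamma)} & \frac{XX'}{s(X'\gamma)}s_1(X'\gamma)e(Y,X,\theta)\\ \frac{XX'}{s(X'\gamma)}s_1(X'\gamma)e(Y,X,\theta) & \frac{XX'}{s(X'\gamma)}\{s_1(X'\gamma)e(Y,X,\theta)\}^2\end{pmatrix}$$ is positive definite.
   Context: Let $Y$ be a scalar random variable and $X$ a random $k\times1$ vector whose first component equals $1$; let $\mathcal{X}$ denote the support of $X$. Write $\mu(X)=E[Y\mid X]$ and $\sigma(X)^2=E[(Y-\mu(X))^2\mid X]$. Let $s$ be a positive scale function, write $s_j(t)=\partial^j s(t)/\partial t^j$ for $j=1,2,3$, and set $\Theta_\gamma=\{\gamma\in\mathbb{R}^k:\Pr[s(X'\gamma)>0]=1\}$ and $\Theta=\mathbb{R}^k\times\Theta_\gamma$. For $\theta=(\beta,\gamma)\in\Theta$ put $e(Y,X,\theta)=(Y-X'\beta)/s(X'\gamma)$. Assumption 1: for $a=0$ or $a=-\infty$, $s:(a,\infty)\to(0,\infty)$ is three times differentiable, strictly increasing and convex, with $\lim_{t\to a}s(t)=0$ and $\lim_{t\to\infty}s(t)=\infty$. Assumption 2: $x\mapsto\sigma(x)^2$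 is bounded away from $0$ uniformly on $\mathcal{X}$. Assumption 4: for all $\gamma\in\Theta_\gamma$, $E[XX'/s(X'\gamma)]$ is nonsingular. *)

theory Defs
  imports "HOL-Probability.Probability"
begin

definition scale_assm ::
  "real set \<Rightarrow> (real \<Rightarrow> real) \<Rightarrow> (real \<Rightarrow> real) \<Rightarrow> (real \<Rightarrow> real) \<Rightarrow> (real \<Rightarrow> real) \<Rightarrow> bool" where
  "scale_assm D s s1 s2 s3 \<longleftrightarrow>
     (D = {0<..} \<or> D = UNIV) \<and>
     (\<forall>t\<in>D. s t > 0) \<and>
     (\<forall>t\<in>D. (s has_real_derivative s1 t) (at t)) \<and>
     (\<forall>t\<in>D. (s1 has_real_derivative s2 t) (at t)) \<and>
     (\<forall>t\<in>D. (s2 has_real_derivative s3 t) (at t)) \<and>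
     strict_mono_on D s \<and>
     convex_on D s \<and>
     (D = {0<..} \<longrightarrow> (s \<longlongrightarrow> 0) (at_right 0)) \<and>
     (D = UNIV \<longrightarrow> (s \<longlongrightarrow> 0) at_bot) \<and>
     filterlim s at_top at_top"

text \<open>\<Theta>_\<gamma> = {\<gamma>. Pr[s(X'\<gamma>) > 0] = 1}, i.e. X'\<gamma> lies a.s. in the domain D of s
  (where s is positive).\<close>
definition Theta_gamma ::
  "'a measure \<Rightarrow> ('a \<Rightarrow> real^'k) \<Rightarrow> real set \<Rightarrow> (real \<Rightarrow> real) \<Rightarrow> (real^'k) set" where
  "Theta_gamma M X D s = {\<gamma>. prob_space.prob M {\<omega>\<in>space M. X \<omega> \<bullet> \<gamma> \<in> D \<and> s (X \<omega> \<bullet> \<gamma>) > 0} = 1}"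

definition resid :: "(real \<Rightarrow> real) \<Rightarrow> real \<Rightarrow> real^'k \<Rightarrow> real^'k \<Rightarrow> real^'k \<Rightarrow> real" where
  "resid s y x \<beta> \<gamma> = (y - x \<bullet> \<beta>) / s (x \<bullet> \<gamma>)"

text \<open>The integrand of \<Psi>(\<theta>), a 2k x 2k matrix indexed by 'k + 'k (Inl = first block,
  Inr = second block).\<close>
definition Psi_integrand ::
  "(real \<Rightarrow> real) \<Rightarrow> (real \<Rightarrow> real) \<Rightarrow> real \<Rightarrow> real^'k \<Rightarrow> real^'k \<Rightarrow> real^'k \<Rightarrow> 'k + 'k \<Rightarrow> 'k + 'k \<Rightarrow> real" where
  "Psi_integrand s s1 y x \<beta> \<gamma> i j =
     (case (i, j) of
        (Inl a, Inl b) \<Rightarrow> x $ a * x $ b / s (x \<bullet> \<gamma>)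
      | (Inl a, Inr b) \<Rightarrow> x $ a * x $ b / s (x \<bullet> \<gamma>) * s1 (x \<bullet> \<gamma>) * resid s y x \<beta> \<gamma>
      | (Inr a, Inl b) \<Rightarrow> x $ a * x $ b / s (x \<bullet> \<gamma>) * s1 (x \<bullet> \<gamma>) * resid s y x \<beta> \<gamma>
      | (Inr a, Inr b) \<Rightarrow> x $ a * x $ b / s (x \<bullet> \<gamma>) * (s1 (x \<bullet> \<gamma>) * resid s y x \<beta> \<gamma>)\<^sup>2)"

definition Psi ::
  "'a measure \<Rightarrow> ('a \<Rightarrow> real) \<Rightarrow> ('a \<Rightarrow> real^'k) \<Rightarrow> (real \<Rightarrow> real) \<Rightarrow> (real \<Rightarrow> real)
    \<Rightarrow> real^'k \<Rightarrow> real^'k \<Rightarrow> real^('k + 'k)^('k + 'k)" where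
  "Psi M Y X s s1 \<beta> \<gamma> = (\<chi> i j. integral\<^sup>L M (\<lambda>\<omega>. Psi_integrand s s1 (Y \<omega>) (X \<omega>) \<beta> \<gamma> i j))"

definition pos_def_matrix :: "real^'n^'n \<Rightarrow> bool" where
  "pos_def_matrix A \<longleftrightarrow> transpose A = A \<and> (\<forall>v. v \<noteq> 0 \<longrightarrow> v \<bullet> (A *v v) > 0)"

end

theory Submission
  imports Defs
begin

text \<open>For v = (a, b) the integrand of v'\<Psi>v equals (X'a + (X'b) s_1(X'\<gamma>) e)^2 / s(X'\<gamma>), which
  is nonnegative, so v'\<Psi>v = 0 forces X'a + (X'b) s_1(X'\<gamma>) e = 0 almost surely. Since s_1 > 0
  (s is convex and strictly increasing), on the event X'b \<noteq> 0 this relation expresses Y as a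
  measurable function of X; there the conditional variance of Y given X vanishes, so by
  Assumption 2 that event is null. Thus X'b = 0 a.s., and then X'a = 0 a.s.; as
  E[XX'/s(X'\<gamma>)] is nonsingular this gives a = b = 0.\<close>

lemma convex_strict_mono_deriv_pos:
  fixes s :: "real \<Rightarrow> real"
  assumes cv: "convex_on D s" and conn: "connected D" and sm: "strict_mono_on D s"
    and der: "(s has_real_derivative d) (at t)"
    and t: "t \<in> interior D" and u: "u \<in> D" "u < t"
  shows "d > 0"
proof -
  have "s u - s t \<ge> d * (u - t)"
    using convex_on_imp_above_tangent[OF cv conn t u(1)] der
    by (simp add: has_field_derivative_at_within)
  moreover have "s u < s t" using sm u t interior_subset by (auto simp: strict_mono_on_def)
  ultimately show ?thesis using u(2) by (smt (verit) mult_nonpos_nonpos)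
qed

lemma scale_assm_deriv_pos:
  assumes A1: "scale_assm D s s1 s2 s3" and t: "t \<in> D"
  shows "s1 t > 0"
proof -
  have D: "D = {0<..} \<or> D = UNIV" using A1 unfolding scale_assm_def by blast
  define u where "u = (if D = UNIV then t - 1 else t / 2)"
  have "u \<in> D" "u < t" using D t unfolding u_def by auto
  moreover have "open D" "connected D" using D by (auto intro: convex_connected)
  ultimately show ?thesis
    using A1 t unfolding scale_assm_def
    by (intro convex_strict_mono_deriv_pos[of D s]) (auto simp: interior_open)
qed

lemma scale_assm_continuous:
  assumes "scale_assm D s s1 s2 s3"
  shows "open D" "continuous_on D s" "continuous_on D s1"
proof -
  show oD: "open D" using assms unfolding scale_assm_def by auto
  show "continuous_on D s" "continuous_on D s1"
    using assms unfolding scale_assm_def continuous_on_eq_continuous_at[OF oD]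
    by (auto intro: DERIV_isCont)
qed

context sigma_finite_subalgebra
begin

lemma real_cond_exp_eq_on_determined:
  fixes Y g :: "'a \<Rightarrow> real"
  assumes Yint: "integrable M Y" and [measurable]: "Y \<in> borel_measurable M"
    and AF: "A \<in> sets F" and gF: "g \<in> borel_measurable F"
    and YA: "AE \<omega> in M. \<omega> \<in> A \<longrightarrow> Y \<omega> = g \<omega>"
  shows "AE \<omega> in M. \<omega> \<in> A \<longrightarrow> real_cond_exp M F Y \<omega> = Y \<omega>"
proof -
  define I where "I = (indicator A :: 'a \<Rightarrow> real)"
  have IF[measurable]: "I \<in> borel_measurable F" unfolding I_def using AF by measurable
  have [measurable]: "I \<in> borel_measurable M" "g \<in> borel_measurable M"
    using IF gF by (simp_all add: measurable_from_subalg[OF subalg])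
  have IY: "AE \<omega> in M. I \<omega> * Y \<omega> = I \<omega> * g \<omega>"
    using YA by eventually_elim (simp add: I_def indicator_def)
  have AM: "A \<in> sets M" using AF subalg by (auto simp: subalgebra_def)
  have int_IY: "integrable M (\<lambda>\<omega>. I \<omega> * Y \<omega>)"
    unfolding I_def using integrable_mult_indicator[OF AM Yint] by simp
  then have int_Ig: "integrable M (\<lambda>\<omega>. I \<omega> * g \<omega>)"
    using integrable_cong_AE[OF _ _ IY] by simp
  have "AE \<omega> in M. I \<omega> * real_cond_exp M F Y \<omega> = real_cond_exp M F (\<lambda>\<omega>. I \<omega> * Y \<omega>) \<omega>"
    using real_cond_exp_mult[OF IF _ int_IY] by auto
  moreover have "AE \<omega> in M. real_cond_exp M F (\<lambda>\<omega>. I \<omega> * Y \<omega>) \<omega> = real_cond_exp M F (\<lambda>\<omega>. I \<omega> * g \<omega>) \<omega>"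
    by (rule real_cond_exp_cong[OF IY]) simp_all
  moreover have "AE \<omega> in M. real_cond_exp M F (\<lambda>\<omega>. I \<omega> * g \<omega>) \<omega> = I \<omega> * g \<omega>"
    by (rule real_cond_exp_F_meas[OF int_Ig]) (use IF gF in measurable)
  ultimately show ?thesis
    using IY by eventually_elim (auto simp: I_def)
qed

lemma nn_cond_exp_eq_0_on:
  assumes [measurable]: "Z \<in> borel_measurable M" and AF: "A \<in> sets F"
    and ZA: "AE \<omega> in M. \<omega> \<in> A \<longrightarrow> Z \<omega> = 0"
  shows "AE \<omega> in M. \<omega> \<in> A \<longrightarrow> nn_cond_exp M F Z \<omega> = 0"
proof -
  define I where "I = (\<lambda>\<omega>. indicator A \<omega> :: ennreal)"
  have IF[measurable]: "I \<in> borel_measurable F" unfolding I_def using AF by measurable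
  have [measurable]: "I \<in> borel_measurable M"
    using IF by (simp add: measurable_from_subalg[OF subalg])
  have [measurable]: "(\<lambda>\<omega>. I \<omega> * Z \<omega>) \<in> borel_measurable M" by measurable
  have "AE \<omega> in M. I \<omega> * nn_cond_exp M F Z \<omega> = nn_cond_exp M F (\<lambda>\<omega>. I \<omega> * Z \<omega>) \<omega>"
    by (rule nn_cond_exp_prod) simp_all
  moreover have "AE \<omega> in M. I \<omega> * Z \<omega> = 0"
    using ZA by eventually_elim (auto simp: I_def indicator_def)
  then have "AE \<omega> in M. nn_cond_exp M F (\<lambda>\<omega>. I \<omega> * Z \<omega>) \<omega> = nn_cond_exp M F (\<lambda>_. 0) \<omega>"
    by (rule nn_cond_exp_cong) measurable
  moreover have "AE \<omega> in M. (0::ennreal) = nn_cond_exp M F (\<lambda>_. 0) \<omega>"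
    by (rule nn_cond_exp_F_meas) simp
  ultimately show ?thesis by eventually_elim (auto simp: I_def)
qed

lemma AE_notin_where_cond_var_bounded_below:
  fixes Y g :: "'a \<Rightarrow> real"
  assumes Yint: "integrable M Y" and [measurable]: "Y \<in> borel_measurable M"
    and AF: "A \<in> sets F" and gF: "g \<in> borel_measurable F"
    and YA: "AE \<omega> in M. \<omega> \<in> A \<longrightarrow> Y \<omega> = g \<omega>"
    and c: "c > 0"
    and var: "AE \<omega> in M. nn_cond_exp M F (\<lambda>\<omega>'. ennreal ((Y \<omega>' - real_cond_exp M F Y \<omega>')\<^sup>2)) \<omega> \<ge> ennreal c"
  shows "AE \<omega> in M. \<omega> \<notin> A"
proof -
  have "AE \<omega> in M. \<omega> \<in> A \<longrightarrow> ennreal ((Y \<omega> - real_cond_exp M F Y \<omega>)\<^sup>2) = 0"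
    using real_cond_exp_eq_on_determined[OF Yint _ AF gF YA] by auto
  from nn_cond_exp_eq_0_on[OF _ AF this, simplified] var show ?thesis
    by eventually_elim (use c in auto)
qed

end

lemma (in prob_space) sigma_finite_subalgebra_vimage_algebra:
  assumes "X \<in> measurable M N"
  shows "sigma_finite_subalgebra M (vimage_algebra (space M) X N)"
proof -
  have "subalgebra M (vimage_algebra (space M) X N)"
    using measurable_space[OF assms] measurable_sets[OF assms]
    by (auto simp: subalgebra_def sets_vimage_algebra2)
  then have "finite_measure_subalgebra M (vimage_algebra (space M) X N)"
    by (simp add: finite_measure_subalgebra_def finite_measure_subalgebra_axioms_def)
  then show ?thesis by (rule finite_measure_subalgebra_is_sigma_finite)
qed

lemma sum_UNIV_Plus:
  "(\<Sum>i\<in>UNIV. g i) = (\<Sum>i\<in>UNIV. g (Inl i)) + (\<Sum>i\<in>UNIV. g (Inr i))"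
  for g :: "'a::finite + 'b::finite \<Rightarrow> 'c::comm_monoid_add"
  using sum.Plus[of "UNIV::'a set" "UNIV::'b set" g] by (simp add: comp_def)

lemma sum_sum_product_const:
  "(\<Sum>i\<in>A. \<Sum>j\<in>B. f i * g j * c) = sum f A * sum g B * (c::'a::comm_semiring_0)"
  by (simp add: sum_product sum_distrib_right[symmetric])

lemma Psi_integrand_quadratic_form:
  fixes v :: "real^('k::finite + 'k)" and x \<beta> \<gamma> :: "real^'k"
  shows "(\<Sum>i\<in>UNIV. \<Sum>j\<in>UNIV. v$i * v$j * Psi_integrand s s1 y x \<beta> \<gamma> i j)
    = (x \<bullet> (\<chi> i. v$Inl i) + (x \<bullet> (\<chi> i. v$Inr i)) * (s1 (x \<bullet> \<gamma>) * resid s y x \<beta> \<gamma>))\<^sup>2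
        / s (x \<bullet> \<gamma>)"
proof -
  define a b :: "real^'k" where "a = (\<chi> i. v$Inl i)" and "b = (\<chi> i. v$Inr i)"
  define S T where "S = s (x \<bullet> \<gamma>)" and "T = s1 (x \<bullet> \<gamma>) * resid s y x \<beta> \<gamma>"
  let ?P = "Psi_integrand s s1 y x \<beta> \<gamma>"
  have "(\<Sum>i\<in>UNIV. \<Sum>j\<in>UNIV. v$i * v$j * ?P i j)
     = (\<Sum>i\<in>UNIV. \<Sum>j\<in>UNIV. (x$i * a$i) * (x$j * a$j) * (1/S))
     + (\<Sum>i\<in>UNIV. \<Sum>j\<in>UNIV. (x$i * a$i) * (x$j * b$j) * (T/S))
     + ((\<Sum>i\<in>UNIV. \<Sum>j\<in>UNIV. (x$i * b$i) * (x$j * a$j) * (T/S))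
     + (\<Sum>i\<in>UNIV. \<Sum>j\<in>UNIV. (x$i * b$i) * (x$j * b$j) * (T\<^sup>2/S)))"
    unfolding sum_UNIV_Plus sum.distrib
    by (simp add: Psi_integrand_def a_def b_def T_def S_def mult_ac)
  also have "\<dots> = (x \<bullet> a + (x \<bullet> b) * T)\<^sup>2 / S"
    unfolding sum_sum_product_const inner_vec_def
    by (simp add: power2_eq_square algebra_simps add_divide_distrib)
  finally show ?thesis by (simp add: a_def b_def S_def T_def)
qed

lemma inner_integral_matrix_mult:
  fixes f :: "'n::finite \<Rightarrow> 'n \<Rightarrow> 'a \<Rightarrow> real"
  assumes "\<And>i j. integrable M (f i j)"
  shows "v \<bullet> ((\<chi> i j. integral\<^sup>L M (f i j)) *v v)
    = (\<integral>\<omega>. (\<Sum>i\<in>UNIV. \<Sum>j\<in>UNIV. v$i * v$j * f i j \<omega>) \<partial>M)"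
proof -
  have "v \<bullet> ((\<chi> i j. integral\<^sup>L M (f i j)) *v v)
      = (\<Sum>i\<in>UNIV. \<Sum>j\<in>UNIV. (\<integral>\<omega>. v$i * v$j * f i j \<omega> \<partial>M))"
    by (simp add: inner_vec_def matrix_vector_mult_def sum_distrib_left mult_ac)
  also have "\<dots> = (\<integral>\<omega>. (\<Sum>i\<in>UNIV. \<Sum>j\<in>UNIV. v$i * v$j * f i j \<omega>) \<partial>M)"
    using assms by (simp add: Bochner_Integration.integral_sum)
  finally show ?thesis .
qed

lemma weighted_second_moment_kernel:
  fixes M :: "'a measure" and X :: "'a \<Rightarrow> real^'k" and W :: "'a \<Rightarrow> real"
  defines "G \<equiv> \<chi> i j. \<integral>\<omega>. X \<omega> $ i * X \<omega> $ j / W \<omega> \<partial>M"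
  assumes inv: "invertible G"
    and int: "\<And>i j. integrable M (\<lambda>\<omega>. X \<omega> $ i * X \<omega> $ j / W \<omega>)"
    and orth: "AE \<omega> in M. X \<omega> \<bullet> c = 0"
  shows "c = 0"
proof -
  have "(G *v c) $ i = (\<Sum>j\<in>UNIV. \<integral>\<omega>. X \<omega> $ i * X \<omega> $ j / W \<omega> * c $ j \<partial>M)" for i
    by (simp only: G_def matrix_vector_mult_def vec_lambda_beta integral_mult_left_zero)
  also have "\<dots> i = (\<integral>\<omega>. X \<omega> $ i / W \<omega> * (X \<omega> \<bullet> c) \<partial>M)" for i
  proof -
    have "(\<Sum>j\<in>UNIV. \<integral>\<omega>. X \<omega> $ i * X \<omega> $ j / W \<omega> * c $ j \<partial>M)
        = (\<integral>\<omega>. (\<Sum>j\<in>UNIV. X \<omega> $ i * X \<omega> $ j / W \<omega> * c $ j) \<partial>M)"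
      by (intro Bochner_Integration.integral_sum[symmetric] integrable_mult_left int)
    then show ?thesis by (simp add: inner_vec_def sum_distrib_left mult_ac)
  qed
  also have "\<dots> i = 0" for i
    using orth by (intro integral_eq_zero_AE) auto
  finally have "G *v c = 0" by (simp add: vec_eq_iff)
  then show "c = 0"
    using inv matrix_left_invertible_ker invertible_left_inverse by blast
qed

lemma Psi_symmetric: "transpose (Psi M Y X s s1 \<beta> \<gamma>) = Psi M Y X s s1 \<beta> \<gamma>"
proof -
  have "Psi_integrand s s1 y x \<beta> \<gamma> j i = Psi_integrand s s1 y x \<beta> \<gamma> i j" for y x i j
    by (auto simp: Psi_integrand_def mult_ac split: sum.splits)
  then show ?thesis by (simp add: transpose_def Psi_def vec_eq_iff)
qed

lemma Theta_gamma_AE_in_domain: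
  assumes "prob_space M" and "\<gamma> \<in> Theta_gamma M X D s"
  shows "AE \<omega> in M. X \<omega> \<bullet> \<gamma> \<in> D"
proof -
  interpret prob_space M by fact
  have "AE \<omega> in M. \<omega> \<in> {\<omega>\<in>space M. X \<omega> \<bullet> \<gamma> \<in> D \<and> s (X \<omega> \<bullet> \<gamma>) > 0}"
    using assms(2) by (intro AE_prob_1) (simp add: Theta_gamma_def)
  then show ?thesis by auto
qed

lemma AE_orth_if_residual_relation:
  fixes M :: "'a measure" and Y :: "'a \<Rightarrow> real" and X :: "'a \<Rightarrow> real^'k"
    and a b \<beta> \<gamma> :: "real^'k"
  assumes P: "prob_space M"
    and Ymeas[measurable]: "Y \<in> borel_measurable M" and Xmeas: "X \<in> borel_measurable M"
    and Yint: "integrable M Y"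
    and A1: "scale_assm D s s1 s2 s3"
    and A2: "\<exists>c>0. AE \<omega> in M.
               nn_cond_exp M (vimage_algebra (space M) X borel)
                 (\<lambda>\<omega>'. ennreal ((Y \<omega>' - real_cond_exp M (vimage_algebra (space M) X borel) Y \<omega>')\<^sup>2)) \<omega>
               \<ge> ennreal c"
    and inD: "AE \<omega> in M. X \<omega> \<bullet> \<gamma> \<in> D"
    and rel: "AE \<omega> in M. X \<omega> \<bullet> a + (X \<omega> \<bullet> b) * (s1 (X \<omega> \<bullet> \<gamma>) * resid s (Y \<omega>) (X \<omega>) \<beta> \<gamma>) = 0"
  shows "AE \<omega> in M. X \<omega> \<bullet> b = 0"
proof -
  interpret prob_space M by (rule P)
  define F where "F = vimage_algebra (space M) X borel"
  interpret F: sigma_finite_subalgebra M F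
    unfolding F_def by (rule sigma_finite_subalgebra_vimage_algebra[OF Xmeas])
  have XF[measurable]: "X \<in> borel_measurable F"
    unfolding F_def by (rule measurable_vimage_algebra1) auto
  have "open D" and cont: "continuous_on D s" "continuous_on D s1"
    using scale_assm_continuous[OF A1] by auto
  then have [measurable]: "D \<in> sets borel" by auto
  define s' s1' where "s' t = (if t \<in> D then s t else 1)" and "s1' t = (if t \<in> D then s1 t else 1)"
    for t
  have [measurable]: "s' \<in> borel_measurable borel" "s1' \<in> borel_measurable borel"
    unfolding s'_def s1'_def
    by (intro borel_measurable_continuous_on_if cont continuous_on_const; simp)+
  \<comment> \<open>Solving the relation for Y on {X'b \<noteq> 0}; s' and s1' are Borel versions of s and s1.\<close>
  define h where "h x = x \<bullet> \<beta> - (x \<bullet> a) * s' (x \<bullet> \<gamma>) / ((x \<bullet> b) * s1' (x \<bullet> \<gamma>))"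
    for x :: "real^'k"
  have hXF: "(\<lambda>\<omega>. h (X \<omega>)) \<in> borel_measurable F" unfolding h_def by measurable
  define A where "A = {\<omega> \<in> space M. X \<omega> \<bullet> b \<noteq> 0}"
  have "{\<omega> \<in> space F. X \<omega> \<bullet> b \<noteq> 0} \<in> sets F" by measurable
  then have AF: "A \<in> sets F" by (simp add: A_def F_def)
  have YA: "AE \<omega> in M. \<omega> \<in> A \<longrightarrow> Y \<omega> = h (X \<omega>)"
    using rel inD
  proof eventually_elim
    case (elim \<omega>)
    let ?t = "X \<omega> \<bullet> \<gamma>"
    have "s ?t > 0" "s1 ?t > 0"
      using A1 elim(2) scale_assm_deriv_pos[OF A1] by (auto simp: scale_assm_def)
    with elim show ?case
      unfolding A_def h_def s'_def s1'_def resid_def by (auto simp: field_simps)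
  qed
  obtain c where "c > 0"
    and "AE \<omega> in M. nn_cond_exp M F (\<lambda>\<omega>'. ennreal ((Y \<omega>' - real_cond_exp M F Y \<omega>')\<^sup>2)) \<omega> \<ge> ennreal c"
    using A2 unfolding F_def by blast
  from F.AE_notin_where_cond_var_bounded_below[OF Yint Ymeas AF hXF YA this] AE_space
  show ?thesis by eventually_elim (auto simp: A_def)
qed

lemma Psi_quadratic_form:
  fixes v :: "real^('k::finite + 'k)"
  assumes int: "\<And>i j. integrable M (\<lambda>\<omega>. Psi_integrand s s1 (Y \<omega>) (X \<omega>) \<beta> \<gamma> i j)"
  defines "q \<equiv> \<lambda>\<omega>. (X \<omega> \<bullet> (\<chi> i. v$Inl i)
      + (X \<omega> \<bullet> (\<chi> i. v$Inr i)) * (s1 (X \<omega> \<bullet> \<gamma>) * resid s (Y \<omega>) (X \<omega>) \<beta> \<gamma>))\<^sup>2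
      / s (X \<omega> \<bullet> \<gamma>)"
  shows "integrable M q" and "v \<bullet> (Psi M Y X s s1 \<beta> \<gamma> *v v) = integral\<^sup>L M q"
proof -
  have q_eq: "q = (\<lambda>\<omega>. \<Sum>i\<in>UNIV. \<Sum>j\<in>UNIV. v$i * v$j * Psi_integrand s s1 (Y \<omega>) (X \<omega>) \<beta> \<gamma> i j)"
    unfolding q_def Psi_integrand_quadratic_form ..
  show "integrable M q"
    unfolding q_eq by (intro Bochner_Integration.integrable_sum integrable_mult_right int)
  show "v \<bullet> (Psi M Y X s s1 \<beta> \<gamma> *v v) = integral\<^sup>L M q"
    unfolding q_eq Psi_def by (rule inner_integral_matrix_mult[OF int])
qed

theorem lemmaA2:
  fixes M :: "'a measure" and Y :: "'a \<Rightarrow> real" and X :: "'a \<Rightarrow> real^'k"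
    and i0 :: 'k and D :: "real set" and s s1 s2 s3 :: "real \<Rightarrow> real"
    and B_beta B_gamma :: "(real^'k) set" and \<beta> \<gamma> :: "real^'k"
  assumes P: "prob_space M"
    and Ymeas: "Y \<in> borel_measurable M" and Xmeas: "X \<in> borel_measurable M"
    and Yint: "integrable M Y"
    and X1: "\<forall>\<omega>\<in>space M. X \<omega> $ i0 = 1"
    and A1: "scale_assm D s s1 s2 s3"
    and A2: "\<exists>c>0. AE \<omega> in M.
               nn_cond_exp M (vimage_algebra (space M) X borel)
                 (\<lambda>\<omega>'. ennreal ((Y \<omega>' - real_cond_exp M (vimage_algebra (space M) X borel) Y \<omega>')\<^sup>2)) \<omega>
               \<ge> ennreal c"
    and A4: "\<forall>g\<in>Theta_gamma M X D s.
               invertible (\<chi> i j. integral\<^sup>L M (\<lambda>\<omega>. X \<omega> $ i * X \<omega> $ j / s (X \<omega> \<bullet> g)))"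
    and Bb: "compact B_beta" and Bg: "compact B_gamma" and Bg_sub: "B_gamma \<subseteq> Theta_gamma M X D s"
    and integ: "\<forall>b\<in>B_beta. \<forall>g\<in>B_gamma. \<forall>i j.
               integrable M (\<lambda>\<omega>. Psi_integrand s s1 (Y \<omega>) (X \<omega>) b g i j)"
    and th: "\<beta> \<in> B_beta" "\<gamma> \<in> B_gamma"
  shows "pos_def_matrix (Psi M Y X s s1 \<beta> \<gamma>)"
proof -
  have \<gamma>_Theta: "\<gamma> \<in> Theta_gamma M X D s" using Bg_sub th by auto
  have inD: "AE \<omega> in M. X \<omega> \<bullet> \<gamma> \<in> D" by (rule Theta_gamma_AE_in_domain[OF P \<gamma>_Theta])
  have int: "\<And>i j. integrable M (\<lambda>\<omega>. Psi_integrand s s1 (Y \<omega>) (X \<omega>) \<beta> \<gamma> i j)"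
    using integ th by blast
  have ker: "c = 0" if "AE \<omega> in M. X \<omega> \<bullet> c = 0" for c
    using A4 \<gamma>_Theta int[of "Inl _" "Inl _"] that
    by (intro weighted_second_moment_kernel[where W = "\<lambda>\<omega>. s (X \<omega> \<bullet> \<gamma>)"])
       (auto simp: Psi_integrand_def)
  show ?thesis unfolding pos_def_matrix_def
  proof (intro conjI allI impI Psi_symmetric)
    fix v :: "real^('k + 'k)" assume "v \<noteq> 0"
    define a b :: "real^'k" where "a = (\<chi> i. v$Inl i)" and "b = (\<chi> i. v$Inr i)"
    define L where "L \<omega> = X \<omega> \<bullet> a + (X \<omega> \<bullet> b) * (s1 (X \<omega> \<bullet> \<gamma>) * resid s (Y \<omega>) (X \<omega>) \<beta> \<gamma>)"
      for \<omega>
    have q_int: "integrable M (\<lambda>\<omega>. (L \<omega>)\<^sup>2 / s (X \<omega> \<bullet> \<gamma>))"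
      and quad: "v \<bullet> (Psi M Y X s s1 \<beta> \<gamma> *v v) = (\<integral>\<omega>. (L \<omega>)\<^sup>2 / s (X \<omega> \<bullet> \<gamma>) \<partial>M)"
      using Psi_quadratic_form[OF int, of v] unfolding L_def a_def b_def by simp_all
    have s_pos: "AE \<omega> in M. s (X \<omega> \<bullet> \<gamma>) > 0"
      using inD by eventually_elim (use A1 in \<open>auto simp: scale_assm_def\<close>)
    then have q_nonneg: "AE \<omega> in M. 0 \<le> (L \<omega>)\<^sup>2 / s (X \<omega> \<bullet> \<gamma>)"
      by eventually_elim simp
    show "v \<bullet> (Psi M Y X s s1 \<beta> \<gamma> *v v) > 0"
    proof (rule ccontr)
      assume "\<not> ?thesis"
      with quad integral_nonneg_AE[OF q_nonneg]
      have "(\<integral>\<omega>. (L \<omega>)\<^sup>2 / s (X \<omega> \<bullet> \<gamma>) \<partial>M) = 0" by simp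
      with integral_nonneg_eq_0_iff_AE[OF q_int q_nonneg] s_pos
      have L0: "AE \<omega> in M. L \<omega> = 0" by (auto elim: AE_mp)
      have "b = 0"
        using L0 unfolding L_def
        by (intro ker AE_orth_if_residual_relation[OF P Ymeas Xmeas Yint A1 A2 inD])
      with L0 have "a = 0" by (intro ker) (simp add: L_def)
      with \<open>b = 0\<close> \<open>v \<noteq> 0\<close> show False
        by (simp add: a_def b_def vec_eq_iff split_sum_all)
    qed
  qed
qed

end
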